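(* Let $Z$ be a topological space and let $f\colon Z\to\mathbb{R}$ be a function (not assumed continuous). Define \[ \Gamma_f^{<}=\{(z,\alpha)\in Z\times\mathbb{R} \mid f(z)<\alpha\}, \] equipped with the subspace topology from $Z\times\mathbb{R}$. If there exists a continuous function $g\colon Z\to\mathbb{R}$ with $f(z)\le g(z)$ for all $z\in Z$, then $\Gamma_f^{<}$ is homotopy equivalent to $Z$. *)

theory Defs
  imports "HOL-Analysis.Analysis"
begin

end

theory Submission
  imports Defs
begin

text \<open>Straight-line homotopy in the fibre direction: pushing each point \<open>(z, \<alpha>)\<close> of
  \<open>\<Gamma>\<^sub>f\<^sup><\<close> linearly to \<open>(z, g z + 1)\<close> stays inside \<open>\<Gamma>\<^sub>f\<^sup><\<close>, because every fibre
  \<open>{\<alpha>. f z < \<alpha>}\<close> is convex and contains \<open>g z + 1\<close>. Hence the graph of the continuous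
  section \<open>z \<mapsto> (z, g z + 1)\<close> is a deformation retract, and it is homeomorphic to \<open>Z\<close>
  via the projection.\<close>

lemma continuous_map_scaleR [continuous_intros]:
  fixes g :: "'a \<Rightarrow> 'b::real_normed_vector"
  shows "\<lbrakk>continuous_map X euclideanreal f; continuous_map X euclidean g\<rbrakk>
         \<Longrightarrow> continuous_map X euclidean (\<lambda>x. f x *\<^sub>R g x)"
  by (simp add: continuous_map_atin tendsto_scaleR)

lemma homotopy_equivalent_space_fibrewise_convex:
  fixes s :: "'a \<Rightarrow> 'b::real_normed_vector"
  assumes s: "continuous_map Z euclidean s"
    and S: "S \<subseteq> topspace Z \<times> UNIV"
    and graph: "\<And>z. z \<in> topspace Z \<Longrightarrow> (z, s z) \<in> S"
    and fibre: "\<And>z. convex {v. (z, v) \<in> S}"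
  shows "subtopology (prod_topology Z euclidean) S homotopy_equivalent_space Z"
proof -
  define X where "X = subtopology (prod_topology Z euclidean) S"
  define \<sigma> where "\<sigma> = (\<lambda>z. (z, s z))"
  define H where "H = (\<lambda>(t::real, z, v). (z, (1 - t) *\<^sub>R s z + t *\<^sub>R v))"
  have topX: "topspace X = S"
    using S by (auto simp: X_def)
  have cont_fst: "continuous_map X Z fst"
    unfolding X_def by (intro continuous_map_from_subtopology continuous_map_fst)
  have cont_snd: "continuous_map X euclidean snd"
    unfolding X_def by (intro continuous_map_from_subtopology continuous_map_snd)
  have "continuous_map Z X \<sigma>"
    using s graph by (auto simp: X_def \<sigma>_def continuous_map_in_subtopology continuous_map_pairwise o_def)
  then have retraction: "retraction_maps X Z fst \<sigma>"
    using cont_fst by (simp add: retraction_maps_def \<sigma>_def)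
  have H_in: "H (t, z, v) \<in> S" if "t \<in> {0..1}" "(z, v) \<in> S" for t z v
  proof -
    have "(z, s z) \<in> S"
      using that(2) S graph by blast
    then show ?thesis
      using that convexD[OF fibre[of z], of "s z" v "1 - t" t] by (simp add: H_def)
  qed
  have time: "continuous_map (prod_topology (top_of_set {0..1}) X) euclideanreal fst"
    using continuous_map_compose[OF continuous_map_fst continuous_map_from_subtopology[OF continuous_map_id]]
    by (simp add: o_def)
  have "continuous_map (prod_topology (top_of_set {0..1}) X) (prod_topology Z euclidean) H"
    using time continuous_map_compose[OF continuous_map_snd cont_fst]
          continuous_map_compose[OF continuous_map_snd cont_snd]
          continuous_map_compose[OF continuous_map_compose[OF continuous_map_snd cont_fst] s]
    unfolding H_def continuous_map_pairwise case_prod_unfold o_def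
    by (auto intro!: continuous_intros)
  then have "continuous_map (prod_topology (top_of_set {0..1}) X) X H"
    using H_in by (auto simp: X_def continuous_map_in_subtopology topX)
  then have "homotopic_with (\<lambda>x. True) X X (\<sigma> \<circ> fst) id"
    unfolding homotopic_with_def by (intro exI[of _ H]) (auto simp: H_def \<sigma>_def)
  then show ?thesis
    using deformation_retraction_imp_homotopy_equivalent_space retraction by (simp add: X_def)
qed

theorem lemma3p1:
  fixes Z :: "'a topology" and f g :: "'a \<Rightarrow> real"
  assumes "continuous_map Z euclideanreal g"
    and "\<forall>z\<in>topspace Z. f z \<le> g z"
  shows "(subtopology (prod_topology Z euclideanreal) {(z, \<alpha>). z \<in> topspace Z \<and> f z < \<alpha>})
           homotopy_equivalent_space Z"
proof (rule homotopy_equivalent_space_fibrewise_convex)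
  show "continuous_map Z euclideanreal (\<lambda>z. g z + 1)"
    using assms(1) by (intro continuous_intros)
  show "\<And>z. z \<in> topspace Z \<Longrightarrow> (z, g z + 1) \<in> {(z, \<alpha>). z \<in> topspace Z \<and> f z < \<alpha>}"
    using assms(2) by force
  fix z
  have "{\<alpha>. (z, \<alpha>) \<in> {(z, \<alpha>). z \<in> topspace Z \<and> f z < \<alpha>}} = (if z \<in> topspace Z then {f z<..} else {})"
    by auto
  then show "convex {\<alpha>. (z, \<alpha>) \<in> {(z, \<alpha>). z \<in> topspace Z \<and> f z < \<alpha>}}"
    by simp
qed auto

end
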